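(* Let $n\ge1$ and $\vec v,\vec w\in\hat N^n$. Then $\vec v<\vec w$ if and only if $\vec w^\dagger<\vec v^\dagger$ (componentwise order). Consequently, if $\mu$ denotes the Möbius function of the poset $(\hat N^n,\le)$, then $\mu(\vec v,\vec w)=\mu(\vec w^\dagger,\vec v^\dagger)$ for all $\vec v,\vec w\in\hat N^n$.
   Context: $\hat N^0=\{()\}$ (empty vector) and for $n\ge1$, $\hat N^n$ is the set of names of planar rooted binary trees with $n$ internal vertices; every element of $\hat N^n$, $n\ge1$, is uniquely $\vec v_l\vee\vec v_r:=(\vec v_l,1,p+1+\vec v_r)$ with $\vec v_l\in\hat N^p,\vec v_r\in\hat N^q$, $p+q+1=n$, where $k+(w_1,\dots,w_q)=(w_1+k,\dots,w_q+k)$. The dendriform involution $\dagger$ is defined by $()^\dagger=()$ and $(\vec v\vee\vec w)^\dagger=\vec w^\dagger\vee\vec v^\dagger$. Componentwise order: $\vec v\le\vec w$ iff $v_i\le w_i$ for all $i$; $<$ means $\le$ and $\neq$. *)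

theory Defs
  imports Main
begin

datatype btree = Leaf | Node btree btree

fun internal :: "btree \<Rightarrow> nat" where
  "internal Leaf = 0"
| "internal (Node l r) = Suc (internal l + internal r)"

fun tname :: "btree \<Rightarrow> nat list" where
  "tname Leaf = []"
| "tname (Node l r) = tname l @ [1] @ map (\<lambda>x. x + (internal l + 1)) (tname r)"

definition Nhat :: "nat \<Rightarrow> nat list set" where
  "Nhat n = {tname t | t. internal t = n}"

text \<open>Mirror of a tree; the dendriform involution on names is induced by it
  (every name has a unique decomposition v_l \<or> v_r, i.e. a unique tree).\<close>
fun mirror :: "btree \<Rightarrow> btree" where
  "mirror Leaf = Leaf"
| "mirror (Node l r) = Node (mirror r) (mirror l)"

definition dagger :: "nat list \<Rightarrow> nat list" where
  "dagger v = tname (mirror (THE t. tname t = v))"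

definition vle :: "nat list \<Rightarrow> nat list \<Rightarrow> bool" where
  "vle v w \<longleftrightarrow> length v = length w \<and> (\<forall>i < length v. v ! i \<le> w ! i)"

definition vlt :: "nat list \<Rightarrow> nat list \<Rightarrow> bool" where
  "vlt v w \<longleftrightarrow> vle v w \<and> v \<noteq> w"

text \<open>The recursion is unfolded with fuel card S, which exceeds the length of every chain in S.\<close>
fun mob_aux :: "nat \<Rightarrow> 'a set \<Rightarrow> ('a \<Rightarrow> 'a \<Rightarrow> bool) \<Rightarrow> 'a \<Rightarrow> 'a \<Rightarrow> int" where
  "mob_aux 0 S le x y = (if x = y then 1 else 0)"
| "mob_aux (Suc k) S le x y =
     (if x = y then 1
      else if le x y then - (\<Sum>z\<in>{z\<in>S. le x z \<and> le z y \<and> z \<noteq> y}. mob_aux k S le x z)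
      else 0)"

definition mobius :: "'a set \<Rightarrow> ('a \<Rightarrow> 'a \<Rightarrow> bool) \<Rightarrow> 'a \<Rightarrow> 'a \<Rightarrow> int" where
  "mobius S le x y = mob_aux (card S) S le x y"

end

theory Submission
  imports Defs
begin

(* Read a name through its tree, with internal vertices numbered in in-order: the entry v_j
   says which earlier vertices lie in the left subtree of j.  Hence v <= w componentwise iff every
   "i lies in the left subtree of j" incidence of the tree of w also holds in the tree of v.  The
   right subtree of i is the longest run of positions after i none of which has i in its left
   subtree, so the right-subtree incidences are monotone in the opposite direction; mirroring
   reverses the positions and exchanges left and right, which gives w^dagger <= v^dagger.

   For the Moebius function, the left recursion defining mu and the right recursion
   mu(x,y) = - sum_{x < z <= y} mu(z,y) have the same solution, and an order-reversing bijection
   carries the one into the other. *)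

locale finite_poset =
  fixes S :: "'a set" and le :: "'a \<Rightarrow> 'a \<Rightarrow> bool"
  assumes finite_carrier: "finite S"
    and refl: "x \<in> S \<Longrightarrow> le x x"
    and trans: "x \<in> S \<Longrightarrow> y \<in> S \<Longrightarrow> z \<in> S \<Longrightarrow> le x y \<Longrightarrow> le y z \<Longrightarrow> le x z"
    and antisym: "x \<in> S \<Longrightarrow> y \<in> S \<Longrightarrow> le x y \<Longrightarrow> le y x \<Longrightarrow> x = y"
begin

abbreviation interval :: "'a \<Rightarrow> 'a \<Rightarrow> 'a set" where
  "interval x y \<equiv> {z \<in> S. le x z \<and> le z y}"

lemma finite_interval [simp]: "finite (interval x y)"
  using finite_carrier by simp

lemma interval_psubset:
  assumes "y \<in> S" "le x y" "z \<in> interval x y" "z \<noteq> y"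
  shows "interval x z \<subset> interval x y"
  using assms trans[of _ z y] antisym[of z y] refl[of y] by blast

lemma mob_aux_fuel_irrelevant:
  assumes "x \<in> S" "y \<in> S" "card (interval x y) \<le> k" "card (interval x y) \<le> k'"
  shows "mob_aux k S le x y = mob_aux k' S le x y"
  using assms(2-)
proof (induction k arbitrary: y k')
  case 0
  then have "interval x y = {}" by simp
  then have "\<not> le x y" using \<open>x \<in> S\<close> refl by blast
  then show ?case by (cases k') auto
next
  case (Suc k)
  show ?case
  proof (cases "x = y \<or> \<not> le x y")
    case True
    then show ?thesis by (cases k') auto
  next
    case False
    then have "x \<in> interval x y" using \<open>x \<in> S\<close> refl by auto
    then have "card (interval x y) \<noteq> 0" by auto
    then obtain k0 where k0: "k' = Suc k0" using Suc.prems by (cases k') auto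
    have "mob_aux k S le x z = mob_aux k0 S le x z" if z: "z \<in> interval x y" "z \<noteq> y" for z
    proof (rule Suc.IH)
      have "card (interval x z) < card (interval x y)"
        using interval_psubset[OF Suc.prems(1) _ z] False by (simp add: psubset_card_mono)
      then show "card (interval x z) \<le> k" "card (interval x z) \<le> k0"
        using Suc.prems k0 by auto
    qed (use z in auto)
    then show ?thesis using False k0 by simp
  qed
qed

lemma mobius_same [simp]: "mobius S le x x = 1"
  unfolding mobius_def by (cases "card S") auto

lemma mobius_eq_0:
  assumes "x \<in> S" "\<not> le x y"
  shows "mobius S le x y = 0"
proof -
  have "x \<noteq> y" using assms refl by blast
  then show ?thesis unfolding mobius_def using assms by (cases "card S") simp_all
qed

lemma mobius_left_rec:
  assumes "x \<in> S" "y \<in> S" "le x y" "x \<noteq> y"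
  shows "mobius S le x y = - (\<Sum>z \<in> {z \<in> S. le x z \<and> le z y \<and> z \<noteq> y}. mobius S le x z)"
proof -
  obtain k where k: "card S = Suc k"
    using assms(1) finite_carrier by (metis card_gt_0_iff emptyE gr0_implies_Suc)
  have fuel: "mob_aux k S le x z = mob_aux (card S) S le x z"
    if z: "z \<in> interval x y" "z \<noteq> y" for z
  proof (rule mob_aux_fuel_irrelevant)
    have "interval x z \<subset> S" using interval_psubset[OF assms(2,3) z] by blast
    then have "card (interval x z) < card S" by (rule psubset_card_mono[OF finite_carrier])
    then show "card (interval x z) \<le> k" using k by simp
    show "card (interval x z) \<le> card S" by (rule card_mono[OF finite_carrier]) auto
  qed (use assms z in auto)
  have "mobius S le x y = - (\<Sum>z \<in> {z \<in> S. le x z \<and> le z y \<and> z \<noteq> y}. mob_aux k S le x z)"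
    unfolding mobius_def k using assms by simp
  also have "\<dots> = - (\<Sum>z \<in> {z \<in> S. le x z \<and> le z y \<and> z \<noteq> y}. mobius S le x z)"
    unfolding mobius_def using fuel by (intro arg_cong[where f = uminus] sum.cong) auto
  finally show ?thesis .
qed

text \<open>A left inverse of the zeta function equals every right inverse: evaluate
  \<open>\<Sum>x\<le>z\<le>u\<le>y. M x z * D u y\<close> in both orders.\<close>
lemma left_rec_eq_right_rec:
  fixes M D :: "'a \<Rightarrow> 'a \<Rightarrow> int"
  assumes M_same: "\<And>x. x \<in> S \<Longrightarrow> M x x = 1"
    and M_rec: "\<And>x y. x \<in> S \<Longrightarrow> y \<in> S \<Longrightarrow> le x y \<Longrightarrow> x \<noteq> y \<Longrightarrow>
          M x y = - (\<Sum>z \<in> {z \<in> S. le x z \<and> le z y \<and> z \<noteq> y}. M x z)"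
    and D_same: "\<And>x. x \<in> S \<Longrightarrow> D x x = 1"
    and D_rec: "\<And>x y. x \<in> S \<Longrightarrow> y \<in> S \<Longrightarrow> le x y \<Longrightarrow> x \<noteq> y \<Longrightarrow>
          D x y = - (\<Sum>z \<in> {z \<in> S. le x z \<and> le z y \<and> z \<noteq> x}. D z y)"
    and x: "x \<in> S" and y: "y \<in> S" and "le x y"
  shows "M x y = D x y"
proof -
  have interval_singleton: "interval x x = {x}" if "x \<in> S" for x
    using that refl antisym by auto
  have M_sum: "(\<Sum>z \<in> interval x u. M x z) = (if x = u then 1 else 0)"
    if "x \<in> S" "u \<in> S" "le x u" for x u
  proof (cases "x = u")
    case False
    have "interval x u = insert u {z \<in> S. le x z \<and> le z u \<and> z \<noteq> u}"
      using that refl by auto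
    then show ?thesis using M_rec[OF that False] False finite_carrier by simp
  qed (use that M_same interval_singleton in simp)
  have D_sum: "(\<Sum>z \<in> interval u y. D z y) = (if u = y then 1 else 0)"
    if "u \<in> S" "y \<in> S" "le u y" for u y
  proof (cases "u = y")
    case False
    have "interval u y = insert u {z \<in> S. le u z \<and> le z y \<and> z \<noteq> u}"
      using that refl by auto
    then show ?thesis using D_rec[OF that False] False finite_carrier by simp
  qed (use that D_same interval_singleton in simp)
  have upper: "{u \<in> interval x y. le z u} = interval z y" if "z \<in> interval x y" for z
    using that x y trans[of z _ y] trans[of x z] by auto
  have lower: "{z \<in> interval x y. le z u} = interval x u" if "u \<in> interval x y" for u
    using that x y trans[of _ u y] trans[of x _ u] by auto
  have y_mem: "y \<in> interval x y" and x_mem: "x \<in> interval x y"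
    using x y \<open>le x y\<close> refl by auto
  have "M x y = (\<Sum>z \<in> interval x y. if z = y then M x z else 0)"
    using y_mem by simp
  also have "\<dots> = (\<Sum>z \<in> interval x y. M x z * (\<Sum>u \<in> interval z y. D u y))"
    by (rule sum.cong) (use y in \<open>auto simp: D_sum\<close>)
  also have "\<dots> = (\<Sum>z \<in> interval x y. \<Sum>u \<in> {u \<in> interval x y. le z u}. M x z * D u y)"
    by (rule sum.cong) (simp_all only: upper sum_distrib_left)
  also have "\<dots> = (\<Sum>u \<in> interval x y. \<Sum>z \<in> {z \<in> interval x y. le z u}. M x z * D u y)"
    by (rule sum.swap_restrict) simp_all
  also have "\<dots> = (\<Sum>u \<in> interval x y. (\<Sum>z \<in> interval x u. M x z) * D u y)"
    by (rule sum.cong) (simp_all only: lower sum_distrib_right)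
  also have "\<dots> = (\<Sum>u \<in> interval x y. if x = u then D u y else 0)"
    by (rule sum.cong) (use x in \<open>auto simp: M_sum\<close>)
  also have "\<dots> = D x y"
    using x_mem by simp
  finally show ?thesis .
qed

lemma mobius_anti_automorphism:
  assumes bij: "bij_betw f S S"
    and reverses: "\<And>x y. x \<in> S \<Longrightarrow> y \<in> S \<Longrightarrow> le (f y) (f x) \<longleftrightarrow> le x y"
    and x: "x \<in> S" and y: "y \<in> S"
  shows "mobius S le x y = mobius S le (f y) (f x)"
proof -
  have f_mem: "f z \<in> S" if "z \<in> S" for z
    using bij_betwE[OF bij] that by blast
  have inj: "inj_on f S"
    using bij by (rule bij_betw_imp_inj_on)
  have collect_image: "{w \<in> S. P w} = f ` {z \<in> S. P (f z)}" for P
    using bij by (auto simp: bij_betw_def)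
  show ?thesis
  proof (cases "le x y")
    case False
    then show ?thesis
      using mobius_eq_0 x y f_mem reverses by simp
  next
    case True
    show ?thesis
    proof (rule left_rec_eq_right_rec[where D = "\<lambda>x y. mobius S le (f y) (f x)"])
      fix x y assume x: "x \<in> S" and y: "y \<in> S" and "le x y" "x \<noteq> y"
      then have "f y \<noteq> f x" "le (f y) (f x)"
        using inj_onD[OF inj] reverses by blast+
      then have "mobius S le (f y) (f x) =
          - (\<Sum>w \<in> {w \<in> S. le (f y) w \<and> le w (f x) \<and> w \<noteq> f x}. mobius S le (f y) w)"
        using mobius_left_rec f_mem x y by blast
      also have "{w \<in> S. le (f y) w \<and> le w (f x) \<and> w \<noteq> f x} =
          f ` {z \<in> S. le (f y) (f z) \<and> le (f z) (f x) \<and> f z \<noteq> f x}"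
        by (rule collect_image)
      also have "{z \<in> S. le (f y) (f z) \<and> le (f z) (f x) \<and> f z \<noteq> f x} =
          {z \<in> S. le x z \<and> le z y \<and> z \<noteq> x}"
        using x y reverses inj_onD[OF inj] by blast
      also have "(\<Sum>w \<in> f ` {z \<in> S. le x z \<and> le z y \<and> z \<noteq> x}. mobius S le (f y) w) =
          (\<Sum>z \<in> {z \<in> S. le x z \<and> le z y \<and> z \<noteq> x}. mobius S le (f y) (f z))"
        by (subst sum.reindex) (auto intro: inj_on_subset[OF inj])
      finally show "mobius S le (f y) (f x) =
          - (\<Sum>z \<in> {z \<in> S. le x z \<and> le z y \<and> z \<noteq> x}. mobius S le (f y) (f z))" .
    qed (use mobius_left_rec x y True in auto)
  qed
qed

end

text \<open>Internal vertices are identified with their in-order positions \<open>0..<internal t\<close>, which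
  index the name. \<open>in_left_subtree t i j\<close>: vertex \<open>i\<close> lies in the left subtree of \<open>j\<close>;
  \<open>in_right_subtree t j i\<close>: vertex \<open>j\<close> lies in the right subtree of \<open>i\<close>.\<close>
fun in_left_subtree :: "btree \<Rightarrow> nat \<Rightarrow> nat \<Rightarrow> bool" where
  "in_left_subtree Leaf i j = False"
| "in_left_subtree (Node l r) i j =
     (if j < internal l then in_left_subtree l i j
      else if j = internal l then i < j
      else internal l < i \<and> in_left_subtree r (i - Suc (internal l)) (j - Suc (internal l)))"

fun in_right_subtree :: "btree \<Rightarrow> nat \<Rightarrow> nat \<Rightarrow> bool" where
  "in_right_subtree Leaf j i = False"
| "in_right_subtree (Node l r) j i =
     (if i < internal l then in_right_subtree l j i
      else if i = internal l then i < j \<and> j < Suc (internal l + internal r)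
      else in_right_subtree r (j - Suc (internal l)) (i - Suc (internal l)))"

lemma in_left_subtree_less: "in_left_subtree t i j \<Longrightarrow> i < j \<and> j < internal t"
  by (induction t arbitrary: i j) (fastforce split: if_splits)+

lemma in_right_subtree_less: "in_right_subtree t j i \<Longrightarrow> i < j \<and> j < internal t"
  by (induction t arbitrary: i j) (fastforce split: if_splits)+

lemma length_tname [simp]: "length (tname t) = internal t"
  by (induction t) auto

lemma internal_mirror [simp]: "internal (mirror t) = internal t"
  by (induction t) auto

lemma mirror_mirror [simp]: "mirror (mirror t) = t"
  by (induction t) auto

lemma nth_tname_right:
  assumes "internal l < j" "j < internal (Node l r)"
  shows "tname (Node l r) ! j = tname r ! (j - Suc (internal l)) + Suc (internal l)"
  using assms by (simp add: nth_append)

lemma nth_tname_bounds: "j < internal t \<Longrightarrow> 1 \<le> tname t ! j \<and> tname t ! j \<le> Suc j"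
proof (induction t arbitrary: j)
  case (Node l r)
  consider "j < internal l" | "j = internal l" | "internal l < j" by linarith
  then show ?case
  proof cases
    case 3
    then have "j - Suc (internal l) < internal r" using Node.prems by simp
    then show ?thesis using 3 nth_tname_right[OF 3 Node.prems] Node.IH(2) by fastforce
  qed (use Node in \<open>simp_all add: nth_append\<close>)
qed simp

text \<open>The entry at position \<open>j\<close> is one more than the leftmost position in the left subtree
  of \<open>j\<close>.\<close>
lemma in_left_subtree_iff_nth_tname:
  "i < j \<Longrightarrow> j < internal t \<Longrightarrow> in_left_subtree t i j \<longleftrightarrow> tname t ! j \<le> Suc i"
proof (induction t arbitrary: i j)
  case (Node l r)
  let ?p = "Suc (internal l)"
  consider "j < internal l" | "j = internal l" | "internal l < j" by linarith
  then show ?case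
  proof cases
    case 3
    have j: "j - ?p < internal r" using 3 Node.prems by auto
    show ?thesis
    proof (cases "internal l < i")
      case True
      then show ?thesis
        using Node.IH(2)[of "i - ?p" "j - ?p"] j Node.prems 3 nth_tname_right[OF 3 Node.prems(2)]
        by auto
    next
      case False
      then show ?thesis using 3 nth_tname_right[OF 3 Node.prems(2)] nth_tname_bounds[OF j] by auto
    qed
  qed (use Node in \<open>simp_all add: nth_append\<close>)
qed simp

lemma in_right_subtree_mirror:
  "i < j \<Longrightarrow> j < internal t \<Longrightarrow>
    in_right_subtree (mirror t) (internal t - 1 - i) (internal t - 1 - j) \<longleftrightarrow> in_left_subtree t i j"
proof (induction t arbitrary: i j)
  case (Node l r)
  let ?p = "internal l" and ?q = "internal r"
  consider "j < ?p" | "j = ?p" | "?p < j" "?p < i" | "?p < j" "i \<le> ?p" by linarith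
  then show ?case
  proof cases
    case 1
    have "?p + ?q - j - Suc ?q = ?p - 1 - j" "?p + ?q - i - Suc ?q = ?p - 1 - i"
      using 1 Node.prems by auto
    then show ?thesis using 1 Node.prems Node.IH(1) by auto
  next
    case 3
    have "?q - 1 - (i - Suc ?p) = ?p + ?q - i" "?q - 1 - (j - Suc ?p) = ?p + ?q - j"
      using 3 Node.prems by auto
    then show ?thesis using 3 Node.prems Node.IH(2)[of "i - Suc ?p" "j - Suc ?p"] by auto
  next
    case 4
    then have "\<not> in_right_subtree (mirror r) (?p + ?q - i) (?p + ?q - j)"
      using in_right_subtree_less[of "mirror r"] by fastforce
    then show ?thesis using 4 Node.prems by auto
  qed (use Node.prems in auto)
qed simp

lemma in_right_subtree_iff:
  "in_right_subtree t j i \<longleftrightarrow>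
    i < j \<and> j < internal t \<and> (\<forall>k. i < k \<longrightarrow> k \<le> j \<longrightarrow> \<not> in_left_subtree t i k)"
proof (induction t arbitrary: i j)
  case (Node l r)
  let ?p = "internal l"
  consider "i < ?p" "j < ?p" | "i < ?p" "?p \<le> j" | "i = ?p" | "?p < i" by linarith
  then show ?case
  proof cases
    case 1
    then show ?thesis using Node.IH(1) by auto
  next
    case 2
    then have "\<not> in_right_subtree l j i" "in_left_subtree (Node l r) i ?p"
      using in_right_subtree_less by fastforce+
    then show ?thesis using 2 by auto
  next
    case 3
    then have "\<not> in_left_subtree (Node l r) i k" for k
      using in_left_subtree_less[of l i k] by auto
    then show ?thesis using 3 by auto
  next
    case 4
    let ?i = "i - Suc ?p" and ?j = "j - Suc ?p"
    have shift: "(\<forall>k. i < k \<longrightarrow> k \<le> j \<longrightarrow> \<not> in_left_subtree (Node l r) i k) \<longleftrightarrow>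
        (\<forall>k. ?i < k \<longrightarrow> k \<le> ?j \<longrightarrow> \<not> in_left_subtree r ?i k)"
    proof (intro iffI allI impI)
      fix k assume "\<forall>k. i < k \<longrightarrow> k \<le> j \<longrightarrow> \<not> in_left_subtree (Node l r) i k" "?i < k" "k \<le> ?j"
      then show "\<not> in_left_subtree r ?i k" using 4 by (auto dest: spec[of _ "k + Suc ?p"])
    next
      fix k assume "\<forall>k. ?i < k \<longrightarrow> k \<le> ?j \<longrightarrow> \<not> in_left_subtree r ?i k" "i < k" "k \<le> j"
      then show "\<not> in_left_subtree (Node l r) i k" using 4 by (auto dest: spec[of _ "k - Suc ?p"])
    qed
    show ?thesis
    proof (cases "i < j")
      case True
      then show ?thesis using 4 shift Node.IH(2)[of ?j ?i] by auto
    next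
      case False
      then show ?thesis using 4 in_right_subtree_less[of r ?j ?i] by auto
    qed
  qed
qed simp

lemma nth_tname_root: "tname (Node l r) ! internal l = 1"
  by (simp add: nth_append)

lemma nth_tname_right_gt_1:
  assumes "internal l < j" "j < internal (Node l r)"
  shows "1 < tname (Node l r) ! j"
proof -
  have "j - Suc (internal l) < internal r" using assms by simp
  then have "1 \<le> tname r ! (j - Suc (internal l))" using nth_tname_bounds by blast
  then show ?thesis using nth_tname_right[OF assms] by simp
qed

text \<open>The root is the last position carrying the entry 1.\<close>
lemma tname_Node_eq_imp_internal_eq:
  assumes "tname (Node l r) = tname (Node l' r')"
  shows "internal l = internal l'"
proof -
  have size: "internal (Node l r) = internal (Node l' r')"
    using arg_cong[OF assms, of length] by simp
  show ?thesis
  proof (rule ccontr)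
    assume "internal l \<noteq> internal l'"
    then consider "internal l < internal l'" | "internal l' < internal l" by linarith
    then show False
    proof cases
      case 1
      have "1 < tname (Node l r) ! internal l'"
        by (rule nth_tname_right_gt_1[OF 1]) (use size in simp)
      then show False unfolding assms nth_tname_root by simp
    next
      case 2
      have "1 < tname (Node l' r') ! internal l"
        by (rule nth_tname_right_gt_1[OF 2]) (use size in simp)
      then show False unfolding assms[symmetric] nth_tname_root by simp
    qed
  qed
qed

lemma inj_tname: "inj tname"
proof (rule injI)
  show "tname s = tname t \<Longrightarrow> s = t" for s t
  proof (induction s arbitrary: t)
    case Leaf
    then show ?case by (cases t) auto
  next
    case (Node l r)
    obtain l' r' where t: "t = Node l' r'"
      using Node.prems by (cases t) auto
    then have "internal l = internal l'"
      using Node.prems tname_Node_eq_imp_internal_eq by blast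
    then have "tname l = tname l'"
        and "map (\<lambda>x. x + Suc (internal l)) (tname r) = map (\<lambda>x. x + Suc (internal l)) (tname r')"
      using Node.prems t by (simp_all add: append_eq_append_conv)
    moreover have "inj (\<lambda>x::nat. x + Suc (internal l))"
      by (simp add: inj_def)
    ultimately have "l = l'" "r = r'"
      using Node.IH by (blast dest: inj_map_eq_map)+
    then show ?case using t by simp
  qed
qed

lemma dagger_tname [simp]: "dagger (tname t) = tname (mirror t)"
proof -
  have "(THE s. tname s = tname t) = t"
    using inj_tname by (auto dest: injD)
  then show ?thesis by (simp add: dagger_def)
qed

lemma vle_tname_iff:
  assumes "internal s = internal t"
  shows "vle (tname s) (tname t) \<longleftrightarrow> (\<forall>i j. in_left_subtree t i j \<longrightarrow> in_left_subtree s i j)"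
proof
  assume le: "vle (tname s) (tname t)"
  show "\<forall>i j. in_left_subtree t i j \<longrightarrow> in_left_subtree s i j"
  proof (intro allI impI)
    fix i j assume "in_left_subtree t i j"
    then have "i < j" "j < internal t" "tname t ! j \<le> Suc i"
      using in_left_subtree_less in_left_subtree_iff_nth_tname by blast+
    moreover have "tname s ! j \<le> tname t ! j" using le \<open>j < internal t\<close> by (simp add: vle_def)
    ultimately show "in_left_subtree s i j" using in_left_subtree_iff_nth_tname assms by simp
  qed
next
  assume sub: "\<forall>i j. in_left_subtree t i j \<longrightarrow> in_left_subtree s i j"
  show "vle (tname s) (tname t)" unfolding vle_def
  proof (intro conjI allI impI)
    fix j assume "j < length (tname s)"
    then have j: "j < internal t" "j < internal s" using assms by auto
    show "tname s ! j \<le> tname t ! j"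
    proof (rule ccontr)
      assume gt: "\<not> tname s ! j \<le> tname t ! j"
      define i where "i = tname t ! j - 1"
      have "i < j" using nth_tname_bounds[OF j(1)] nth_tname_bounds[OF j(2)] gt i_def by auto
      moreover have "in_left_subtree t i j"
        using in_left_subtree_iff_nth_tname[OF \<open>i < j\<close> j(1)] i_def by simp
      ultimately have "tname s ! j \<le> Suc i" using sub in_left_subtree_iff_nth_tname j(2) by blast
      then show False using gt i_def nth_tname_bounds[OF j(1)] by simp
    qed
  qed (use assms in simp)
qed

lemma vle_tname_mirror:
  assumes size: "internal s = internal t" and le: "vle (tname s) (tname t)"
  shows "vle (tname (mirror t)) (tname (mirror s))"
proof -
  have "in_left_subtree t i j \<Longrightarrow> in_left_subtree s i j" for i j
    using le vle_tname_iff[OF size] by blast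
  then have right: "in_right_subtree s j i \<Longrightarrow> in_right_subtree t j i" for i j
    unfolding in_right_subtree_iff using size by (metis (no_types))
  have mirror_left: "in_left_subtree (mirror x) i j \<longleftrightarrow>
      in_right_subtree x (internal x - 1 - i) (internal x - 1 - j)"
    if "i < j" "j < internal x" for x i j
    using in_right_subtree_mirror[of i j "mirror x"] that by simp
  have "in_left_subtree (mirror t) i j" if "in_left_subtree (mirror s) i j" for i j
  proof -
    have "i < j" "j < internal s" "j < internal t"
      using in_left_subtree_less[OF that] size by simp_all
    then show ?thesis using that mirror_left[of i j s] mirror_left[of i j t] right size by simp
  qed
  then show ?thesis using vle_tname_iff[of "mirror t" "mirror s"] size by simp
qed

lemma dagger_mem_Nhat: "v \<in> Nhat n \<Longrightarrow> dagger v \<in> Nhat n"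
  unfolding Nhat_def by (auto intro: exI[where x = "mirror _"])

lemma dagger_dagger: "v \<in> Nhat n \<Longrightarrow> dagger (dagger v) = v"
  unfolding Nhat_def by auto

lemma vle_dagger_iff:
  assumes "v \<in> Nhat n" "w \<in> Nhat n"
  shows "vle (dagger w) (dagger v) \<longleftrightarrow> vle v w"
proof -
  obtain s t where "v = tname s" "w = tname t" "internal s = n" "internal t = n"
    using assms unfolding Nhat_def by blast
  then show ?thesis
    using vle_tname_mirror[of s t] vle_tname_mirror[of "mirror t" "mirror s"] by auto
qed

lemma bij_betw_dagger_Nhat: "bij_betw dagger (Nhat n) (Nhat n)"
  by (rule bij_betw_byWitness[where f' = dagger]) (auto simp: dagger_dagger dagger_mem_Nhat)

lemma finite_Nhat: "finite (Nhat n)"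
proof (rule finite_subset)
  show "Nhat n \<subseteq> {xs. set xs \<subseteq> {..n} \<and> length xs = n}"
  proof
    fix v assume "v \<in> Nhat n"
    then obtain t where t: "v = tname t" "internal t = n"
      unfolding Nhat_def by blast
    have "x \<le> n" if x: "x \<in> set v" for x
    proof -
      obtain j where "j < length v" "x = v ! j"
        using x by (auto simp: in_set_conv_nth)
      then show ?thesis using nth_tname_bounds[of j t] t by simp
    qed
    then show "v \<in> {xs. set xs \<subseteq> {..n} \<and> length xs = n}" using t by auto
  qed
qed (rule finite_lists_length_eq, simp)

lemma finite_poset_Nhat: "finite_poset (Nhat n) vle"
proof
  show "finite (Nhat n)" by (rule finite_Nhat)
  show "vle v v" for v
    by (simp add: vle_def)
  show "vle u w" if "vle u v" "vle v w" for u v w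
    unfolding vle_def
  proof (intro conjI allI impI)
    show "length u = length w" using that by (simp add: vle_def)
    fix i assume "i < length u"
    then have "u ! i \<le> v ! i" "v ! i \<le> w ! i" using that by (auto simp: vle_def)
    then show "u ! i \<le> w ! i" by (rule le_trans)
  qed
  show "u = v" if "vle u v" "vle v u" for u v
    using that unfolding vle_def by (auto intro!: nth_equalityI intro: le_antisym)
qed

theorem mainTheorem16:
  fixes n :: nat and v w :: "nat list"
  assumes "n \<ge> 1" and "v \<in> Nhat n" and "w \<in> Nhat n"
  shows "(vlt v w \<longleftrightarrow> vlt (dagger w) (dagger v))
         \<and> mobius (Nhat n) vle v w = mobius (Nhat n) vle (dagger w) (dagger v)"
proof
  have "dagger w = dagger v \<longleftrightarrow> v = w"
    using dagger_dagger[OF assms(2)] dagger_dagger[OF assms(3)] by (auto dest: arg_cong[of _ _ dagger])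
  then show "vlt v w \<longleftrightarrow> vlt (dagger w) (dagger v)"
    unfolding vlt_def using vle_dagger_iff[OF assms(2,3)] by blast
  interpret finite_poset "Nhat n" vle
    by (rule finite_poset_Nhat)
  show "mobius (Nhat n) vle v w = mobius (Nhat n) vle (dagger w) (dagger v)"
    by (rule mobius_anti_automorphism[OF bij_betw_dagger_Nhat vle_dagger_iff assms(2,3)])
qed

end
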